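(* Let $A,s$ be positive integers and $(\alpha,\beta)\in(\mathbb{Z}/s\mathbb{Z})^2$, and let $S_{A,\alpha,\beta,s}=\{[A,b,a] : (a,b)\equiv(\alpha,\beta)\pmod s,\ Aa-b^2>0\}$. Let $K,L$ be $\mathbb{Z}$-lattices on the same quadratic space such that $K\prec_{A,(\alpha,\beta),s}L$, and let $\ell\in S_{A,\alpha,\beta,s}$. If $\ell$ is represented by $K$, then $\ell$ is represented by $L$. In particular, if $M\prec_{A,(\alpha,\beta),s}L$ for every $M\in\mathrm{gen}(L)$, then $\ell$ being represented by some lattice in $\mathrm{gen}(L)$ implies that $\ell$ is represented by $L$.
   Context: All $\mathbb{Z}$-lattices are free $\mathbb{Z}$-modules of finite rank with a positive definite, integral symmetric bilinear form $B$; $Q(v)=B(v,v)$. A representation $\sigma:\ell\to L$ is a linear map with $B(\sigma x,\sigma y)=B(x,y)$ for all $x,y\in\ell$; $\ell$ is represented by $L$ if one exists. $[A,b,a]$ denotes the binary lattice $\mathbb{Z}v_1+\mathbb{Z}v_2$ with $Q(v_1)=A$, $B(v_1,v_2)=b$, $Q(v_2)=a$. $\mathrm{gen}(L)$ is the set of lattices $K$ on the quadratic space $V=\mathbb{Q}L$ with $K_p\cong L_p$ (over $\mathbb{Z}_p$) for all primes $p$. $R(A,K)=\{v\in K: Q(v)=A\}$. For $\mathbb{Z}$-lattices $K,L$ on the same quadratic space $V$, $v\in R(A,K)$ and $(\alpha,\beta)\in(\mathbb{Z}/s\mathbb{Z})^2$, set $R_v(K,\alpha,\beta,s)=\{u\in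 K/sK: Q(u)\equiv\alpha,\ B(u,v)\equiv\beta \pmod s\}$ and $R_v(K,L,s)=\{\tau\in O(V):\tau(sK)\subseteq L,\ \tau(v)\in L\}$. A coset $u\in R_v(K,\alpha,\beta,s)$ is good if there is $\tau\in R_v(K,L,s)$ with $\tau(\tilde u)\in L$ for all $\tilde u\in K$ with $\tilde u\equiv u\pmod{sK}$. We write $K\prec_{A,(\alpha,\beta),s}L$ if for every $v\in R(A,K)$ every coset of $R_v(K,\alpha,\beta,s)$ is good. *)

theory Defs
  imports "HOL-Analysis.Analysis" "HOL-Computational_Algebra.Primes"
begin

text \<open>The quadratic space V is modelled as rat^'n (dimension CARD('n)) with the
  bilinear form given by a Gram matrix G.\<close>

definition bform :: "rat^'n^'n \<Rightarrow> rat^'n \<Rightarrow> rat^'n \<Rightarrow> rat" where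
  "bform G x y = (\<Sum>i\<in>UNIV. \<Sum>j\<in>UNIV. x$i * G$i$j * y$j)"

definition qform :: "rat^'n^'n \<Rightarrow> rat^'n \<Rightarrow> rat" where
  "qform G x = bform G x x"

definition pos_def_space :: "rat^'n^'n \<Rightarrow> bool" where
  "pos_def_space G \<longleftrightarrow> (\<forall>i j. G$i$j = G$j$i) \<and> (\<forall>x. x \<noteq> 0 \<longrightarrow> qform G x > 0)"

definition is_int_rat :: "rat \<Rightarrow> bool" where
  "is_int_rat q \<longleftrightarrow> (\<exists>k::int. q = of_int k)"

definition rcong :: "rat \<Rightarrow> int \<Rightarrow> int \<Rightarrow> bool" where
  "rcong x a s \<longleftrightarrow> (\<exists>k::int. x = of_int a + of_int s * of_int k)"

definition is_lattice :: "rat^'n^'n \<Rightarrow> (rat^'n) set \<Rightarrow> bool" where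
  "is_lattice G K \<longleftrightarrow>
     (\<exists>e :: 'n \<Rightarrow> rat^'n.
        (\<forall>c :: 'n \<Rightarrow> rat. (\<Sum>i\<in>UNIV. c i *s e i) = 0 \<longrightarrow> (\<forall>i. c i = 0)) \<and>
        K = {(\<Sum>i\<in>UNIV. of_int (c i) *s e i) | c :: 'n \<Rightarrow> int. True}) \<and>
     (\<forall>x\<in>K. \<forall>y\<in>K. is_int_rat (bform G x y))"

definition orth :: "rat^'n^'n \<Rightarrow> (rat^'n \<Rightarrow> rat^'n) \<Rightarrow> bool" where
  "orth G \<tau> \<longleftrightarrow> (\<forall>x y. \<tau> (x + y) = \<tau> x + \<tau> y) \<and> (\<forall>c x. \<tau> (c *s x) = c *s \<tau> x) \<and>
                  bij \<tau> \<and> (\<forall>x y. bform G (\<tau> x) (\<tau> y) = bform G x y)"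

definition R_set :: "rat^'n^'n \<Rightarrow> int \<Rightarrow> (rat^'n) set \<Rightarrow> (rat^'n) set" where
  "R_set G A K = {v\<in>K. qform G v = of_int A}"

definition smul_set :: "int \<Rightarrow> (rat^'n) set \<Rightarrow> (rat^'n) set" where
  "smul_set s K = (\<lambda>x. of_int s *s x) ` K"

definition Rv_KLs :: "rat^'n^'n \<Rightarrow> rat^'n \<Rightarrow> (rat^'n) set \<Rightarrow> (rat^'n) set \<Rightarrow> int
                      \<Rightarrow> (rat^'n \<Rightarrow> rat^'n) set" where
  "Rv_KLs G v K L s = {\<tau>. orth G \<tau> \<and> \<tau> ` smul_set s K \<subseteq> L \<and> \<tau> v \<in> L}"

text \<open>Cosets u + sK in R_v(K,alpha,beta,s), represented by u in K.\<close>
definition Rv_coset :: "rat^'n^'n \<Rightarrow> rat^'n \<Rightarrow> (rat^'n) set \<Rightarrow> int \<Rightarrow> int \<Rightarrow> int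
                      \<Rightarrow> (rat^'n) set" where
  "Rv_coset G v K \<alpha> \<beta> s = {u\<in>K. rcong (qform G u) \<alpha> s \<and> rcong (bform G u v) \<beta> s}"

definition good_coset :: "rat^'n^'n \<Rightarrow> rat^'n \<Rightarrow> (rat^'n) set \<Rightarrow> (rat^'n) set \<Rightarrow> int
                      \<Rightarrow> rat^'n \<Rightarrow> bool" where
  "good_coset G v K L s u \<longleftrightarrow>
     (\<exists>\<tau>\<in>Rv_KLs G v K L s. \<forall>w\<in>smul_set s K. \<tau> (u + w) \<in> L)"

definition prec :: "rat^'n^'n \<Rightarrow> (rat^'n) set \<Rightarrow> int \<Rightarrow> int \<Rightarrow> int \<Rightarrow> int
                      \<Rightarrow> (rat^'n) set \<Rightarrow> bool" where
  "prec G K A \<alpha> \<beta> s L \<longleftrightarrow>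
     (\<forall>v\<in>R_set G A K. \<forall>u\<in>Rv_coset G v K \<alpha> \<beta> s. good_coset G v K L s u)"

text \<open>The binary lattice [A,b,a] is represented by K: a representation is determined
  by the images x, y of the basis vectors v1, v2.\<close>
definition represents :: "rat^'n^'n \<Rightarrow> (rat^'n) set \<Rightarrow> int \<Rightarrow> int \<Rightarrow> int \<Rightarrow> bool" where
  "represents G K A b a \<longleftrightarrow>
     (\<exists>x\<in>K. \<exists>y\<in>K. qform G x = of_int A \<and> bform G x y = of_int b \<and> qform G y = of_int a)"

definition in_S :: "int \<Rightarrow> int \<Rightarrow> int \<Rightarrow> int \<Rightarrow> int \<Rightarrow> int \<Rightarrow> bool" where
  "in_S A \<alpha> \<beta> s b a \<longleftrightarrow> s dvd (a - \<alpha>) \<and> s dvd (b - \<beta>) \<and> A * a - b^2 > 0"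

definition loc :: "int \<Rightarrow> (rat^'n) set \<Rightarrow> (rat^'n) set" where
  "loc p K = {(1 / of_int d) *s x | x d. x \<in> K \<and> \<not> p dvd d}"

text \<open>Genus: K_p isometric to L_p for every prime p (realised via the Z_(p)-localisations
  and a rational isometry of V).\<close>
definition gen :: "rat^'n^'n \<Rightarrow> (rat^'n) set \<Rightarrow> (rat^'n) set set" where
  "gen G L = {K. is_lattice G K \<and>
     (\<forall>p::int. prime p \<longrightarrow> (\<exists>\<tau>. orth G \<tau> \<and> loc p (\<tau> ` L) = loc p K))}"

end

theory Submission
  imports Defs
begin

text \<open>If \<open>x, y \<in> K\<close> realise \<open>[A,b,a]\<close>, then \<open>x \<in> R(A,K)\<close> and the congruences defining
  \<open>S\<^bsub>A,\<alpha>,\<beta>,s\<^esub>\<close> say exactly that \<open>y\<close> lies in a coset of \<open>R\<^sub>x(K,\<alpha>,\<beta>,s)\<close>. That coset is good,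
  so some isometry \<open>\<tau>\<close> maps \<open>x\<close> and \<open>y\<close> (the coset contains \<open>y + 0\<close>) into \<open>L\<close>; the images
  realise \<open>[A,b,a]\<close> in \<open>L\<close>. The genus statement is the special case \<open>K = M\<close>.\<close>

lemma bform_sym:
  assumes "\<forall>i j. G$i$j = G$j$i"
  shows "bform G x y = bform G y x"
proof -
  have "bform G x y = (\<Sum>j\<in>UNIV. \<Sum>i\<in>UNIV. x$i * G$i$j * y$j)"
    unfolding bform_def by (rule sum.swap)
  also have "\<dots> = bform G y x"
    unfolding bform_def using assms by (intro sum.cong refl) (simp add: algebra_simps)
  finally show ?thesis .
qed

lemma qform_orth:
  assumes "orth G \<tau>"
  shows "qform G (\<tau> x) = qform G x"
  using assms unfolding orth_def qform_def by blast

lemma bform_orth: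
  assumes "orth G \<tau>"
  shows "bform G (\<tau> x) (\<tau> y) = bform G x y"
  using assms unfolding orth_def by blast

lemma rcong_of_int_if_dvd:
  assumes "s dvd (a - \<alpha>)"
  shows "rcong (of_int a) \<alpha> s"
proof -
  from assms obtain k where "a = \<alpha> + s * k"
    by (metis dvdE diff_add_cancel add.commute)
  then show ?thesis unfolding rcong_def by (intro exI[of _ k]) simp
qed

lemma zero_mem_lattice:
  fixes K :: "(rat^'n) set"
  assumes "is_lattice G K"
  shows "0 \<in> K"
proof -
  from assms obtain e where "K = {(\<Sum>i\<in>UNIV. of_int (c i) *s e i) | c :: 'n \<Rightarrow> int. True}"
    unfolding is_lattice_def by blast
  then show ?thesis by (auto intro!: exI[of _ "\<lambda>_. 0::int"])
qed

lemma zero_mem_smul_set: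
  assumes "0 \<in> K"
  shows "0 \<in> smul_set s K"
  unfolding smul_set_def using assms by (metis image_eqI vector_smult_rzero)

lemma good_coset_obtains_isometry:
  assumes "is_lattice G K" and "good_coset G v K L s u"
  obtains \<tau> where "orth G \<tau>" and "\<tau> v \<in> L" and "\<tau> u \<in> L"
proof -
  from assms(2) obtain \<tau> where \<tau>: "\<tau> \<in> Rv_KLs G v K L s" "\<forall>w\<in>smul_set s K. \<tau> (u + w) \<in> L"
    unfolding good_coset_def by blast
  have "\<tau> (u + 0) \<in> L"
    using \<tau>(2) zero_mem_smul_set[OF zero_mem_lattice[OF assms(1)]] by blast
  with \<tau>(1) show ?thesis using that unfolding Rv_KLs_def by auto
qed

lemma represents_if_prec:
  assumes sym: "\<forall>i j. G$i$j = G$j$i"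
    and K: "is_lattice G K" and S: "in_S A \<alpha> \<beta> s b a"
    and prec: "prec G K A \<alpha> \<beta> s L" and rep: "represents G K A b a"
  shows "represents G L A b a"
proof -
  from rep obtain x y where xy: "x \<in> K" "y \<in> K" "qform G x = of_int A"
      "bform G x y = of_int b" "qform G y = of_int a"
    unfolding represents_def by blast
  have "x \<in> R_set G A K"
    using xy unfolding R_set_def by blast
  moreover have "y \<in> Rv_coset G x K \<alpha> \<beta> s"
    using xy S rcong_of_int_if_dvd bform_sym[OF sym, of y x]
    unfolding Rv_coset_def in_S_def by auto
  ultimately have "good_coset G x K L s y"
    using prec unfolding prec_def by blast
  then obtain \<tau> where "orth G \<tau>" "\<tau> x \<in> L" "\<tau> y \<in> L"
    using good_coset_obtains_isometry[OF K] by blast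
  then show ?thesis
    using xy qform_orth bform_orth unfolding represents_def by metis
qed

theorem lemma2p2:
  fixes G :: "rat^'n^'n" and K L :: "(rat^'n) set" and A s \<alpha> \<beta> b a :: int
  assumes "pos_def_space G"
    and "A > 0" and "s > 0"
    and "is_lattice G K" and "is_lattice G L"
    and "in_S A \<alpha> \<beta> s b a"
  shows "(prec G K A \<alpha> \<beta> s L \<and> represents G K A b a \<longrightarrow> represents G L A b a) \<and>
         ((\<forall>M\<in>gen G L. prec G M A \<alpha> \<beta> s L) \<and> (\<exists>M\<in>gen G L. represents G M A b a)
            \<longrightarrow> represents G L A b a)"
proof -
  have sym: "\<forall>i j. G$i$j = G$j$i"
    using assms(1) unfolding pos_def_space_def by blast
  have "represents G L A b a" if "M \<in> gen G L" "prec G M A \<alpha> \<beta> s L" "represents G M A b a" for M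
  proof -
    have "is_lattice G M" using that(1) unfolding gen_def by blast
    then show ?thesis using represents_if_prec[OF sym _ assms(6)] that(2,3) by blast
  qed
  then show ?thesis
    using represents_if_prec[OF sym assms(4,6)] by blast
qed

end
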